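(* Let $T = T_d(I)$ be a balanced triangular region. The following statements hold. \begin{enumerate} \item Let $\tau$ and $\tau'$ be two lozenge tilings of $T$. Then their perfect matching signs are the same if and only if their lattice path signs are the same, that is, \[ \operatorname{sgn}_{\mathrm{pm}}(\tau) \cdot \operatorname{sgn}_{\mathrm{lp}}(\tau) = \operatorname{sgn}_{\mathrm{pm}}(\tau') \cdot \operatorname{sgn}_{\mathrm{lp}}(\tau'). \] \item In particular, we have that \[ |\det{Z(T)}| = |\det{N(T)}|. \] \end{enumerate}
   Context: Let $R=K[x,y,z]$ and $I\subset R$ a monomial ideal. The triangular region $\mathcal{T}_d$ is an equilateral triangle of side length $d$ subdivided into unit triangles; the downward-pointing unit triangles are labeled by the monomials of degree $d-2$ and the upward-pointing ones by the monomials of degree $d-1$ ($x^{d-1}$ at the top, $y^{d-1}$ bottom-left, $z^{d-1}$ bottom-right, and an upward triangle sharing an edge with a downward triangle has label equal to the downward label times a variable). $T_d(I)$ is obtained from $\mathcal{T}_d$ by removing the triangles whose labels lie in $I$. It is balanced if it has as many upward- as downward-pointing unit triangles. A lozenge is a union of two unit triangles sharing an edge; a lozenge tiling covers every triangle of $T$ by exactly one lozenge. Monomials are ordered by graded reverse-lexicographic order. $Z(T)$ is the bi-adjacency matrix of the bipartite graph whose vertices are the centers $B_1,\dots$ of the downward triangles and $W_1,\dots$ of the upward triangles of $T$ (each ordered by reverse-lex order of labels), with $Z(T)_{(i,j)}=1$ iff the triangles $B_i$ and $W_j$ share an edge. A tiling $\tau$ gives a perfect matching, i.e. a bijection $\pi$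 viewed as a permutation; the perfect matching sign is $\operatorname{sgn}_{\mathrm{pm}}(\tau):=\operatorname{sgn}(\pi)$. $L(T)$ is the set of midpoints of the edges of triangles of $T$ parallel to the upper-left boundary of $\mathcal{T}_d$, viewed as a sub-lattice of $\mathbb{Z}^2$ (steps East or Southeast). $A_1,\dots,A_m$ are the vertices of $L(T)$ lying only on upward-pointing triangles of $T$, and $E_1,\dots,E_m$ those lying only on downward-pointing triangles of $T$, each ordered from smallest to largest in reverse-lex order of the label of the upward triangle whose upper-left edge contains the vertex. $N(T)_{(i,j)}$ is the number of lattice paths in $\mathbb{Z}^2$ from $A_i$ to $E_j$. A tiling $\tau$ determines a family of non-intersecting lattice paths (joining the vertices of $L(T)$ on each lozenge); if the path starting at $A_i$ ends at $E_{\lambda(i)}$, the lattice path sign is $\operatorname{sgn}_{\mathrm{lp}}(\tau):=\operatorname{sgn}(\lambda)$. *)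

theory Defs
  imports "HOL-Combinatorics.Permutations" "Jordan_Normal_Form.Determinant"
begin

text \<open>A monomial x^a y^b z^c is represented by its exponent triple (a,b,c).
  A monomial ideal of K[x,y,z] is determined by the set of monomials it contains,
  which is exactly an upward closed set of exponent triples; we represent I by that set.\<close>

type_synonym mono = "nat \<times> nat \<times> nat"

definition monomial_ideal :: "mono set \<Rightarrow> bool" where
  "monomial_ideal I \<longleftrightarrow>
     (\<forall>a b c a' b' c'. (a,b,c) \<in> I \<longrightarrow> a \<le> a' \<longrightarrow> b \<le> b' \<longrightarrow> c \<le> c' \<longrightarrow> (a',b',c') \<in> I)"

fun mdeg :: "mono \<Rightarrow> nat" where
  "mdeg (a,b,c) = a + b + c"

fun times_x :: "mono \<Rightarrow> mono" where "times_x (a,b,c) = (Suc a, b, c)"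
fun times_y :: "mono \<Rightarrow> mono" where "times_y (a,b,c) = (a, Suc b, c)"
fun times_z :: "mono \<Rightarrow> mono" where "times_z (a,b,c) = (a, b, Suc c)"

text \<open>Graded reverse-lexicographic order (x > y > z) on monomials of the same degree:
  m < m' iff the last nonzero entry of m - m' is positive.\<close>
fun revlex_less :: "mono \<Rightarrow> mono \<Rightarrow> bool" where
  "revlex_less (a,b,c) (a',b',c') \<longleftrightarrow> mdeg (a,b,c) < mdeg (a',b',c') \<or>
     (mdeg (a,b,c) = mdeg (a',b',c') \<and> (c' < c \<or> (c = c' \<and> b' < b)))"

definition rl_nth :: "mono set \<Rightarrow> nat \<Rightarrow> mono" where
  "rl_nth S i = (THE m. m \<in> S \<and> card {m' \<in> S. revlex_less m' m} = i)"

datatype tri = Up mono | Down mono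

fun label :: "tri \<Rightarrow> mono" where
  "label (Up m) = m" | "label (Down m) = m"

definition tri_region :: "nat \<Rightarrow> tri set" where
  "tri_region d = {Up m | m. mdeg m + 1 = d} \<union> {Down m | m. mdeg m + 2 = d}"

definition T_region :: "nat \<Rightarrow> mono set \<Rightarrow> tri set" where
  "T_region d I = {t \<in> tri_region d. label t \<notin> I}"

definition up_labels :: "tri set \<Rightarrow> mono set" where
  "up_labels T = {m. Up m \<in> T}"

definition down_labels :: "tri set \<Rightarrow> mono set" where
  "down_labels T = {m. Down m \<in> T}"

definition balanced :: "tri set \<Rightarrow> bool" where
  "balanced T \<longleftrightarrow> card (up_labels T) = card (down_labels T)"

text \<open>Unit triangles sharing an edge: the downward triangle m shares its three edges with the
  upward triangles m x (top edge), m y (left edge) and m z (right edge).\<close>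
definition shares_edge :: "tri \<Rightarrow> tri \<Rightarrow> bool" where
  "shares_edge t t' \<longleftrightarrow>
     (\<exists>m. t = Down m \<and> t' \<in> {Up (times_x m), Up (times_y m), Up (times_z m)}) \<or>
     (\<exists>m. t' = Down m \<and> t \<in> {Up (times_x m), Up (times_y m), Up (times_z m)})"

definition lozenge :: "tri set \<Rightarrow> bool" where
  "lozenge L \<longleftrightarrow> (\<exists>t t'. shares_edge t t' \<and> L = {t, t'})"

definition lozenge_tiling :: "tri set \<Rightarrow> tri set set \<Rightarrow> bool" where
  "lozenge_tiling T \<tau> \<longleftrightarrow> (\<forall>L \<in> \<tau>. lozenge L \<and> L \<subseteq> T) \<and> (\<forall>t \<in> T. \<exists>!L. L \<in> \<tau> \<and> t \<in> L)"

definition B_tri :: "tri set \<Rightarrow> nat \<Rightarrow> mono" where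
  "B_tri T i = rl_nth (down_labels T) i"

definition W_tri :: "tri set \<Rightarrow> nat \<Rightarrow> mono" where
  "W_tri T j = rl_nth (up_labels T) j"

definition Z_mat :: "tri set \<Rightarrow> int mat" where
  "Z_mat T = mat (card (down_labels T)) (card (up_labels T))
     (\<lambda>(i,j). if shares_edge (Down (B_tri T i)) (Up (W_tri T j)) then 1 else 0)"

definition pm_perm :: "tri set \<Rightarrow> tri set set \<Rightarrow> nat \<Rightarrow> nat" where
  "pm_perm T \<tau> i = (if i < card (down_labels T)
      then (THE j. j < card (up_labels T) \<and> {Down (B_tri T i), Up (W_tri T j)} \<in> \<tau>) else i)"

definition sgn_pm :: "tri set \<Rightarrow> tri set set \<Rightarrow> int" where
  "sgn_pm T \<tau> = sign (pm_perm T \<tau>)"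

text \<open>Vertices of L(T) are midpoints of edges parallel to the upper-left boundary; each such
  edge is the upper-left edge of a unique upward triangle of \<T>_d, whose label u names the
  vertex.  The vertex u lies on the upward triangle u (if present in T) and on the downward
  triangle m with u = m z (if present in T).\<close>
definition on_up :: "tri set \<Rightarrow> mono \<Rightarrow> bool" where
  "on_up T u \<longleftrightarrow> Up u \<in> T"

definition on_down :: "tri set \<Rightarrow> mono \<Rightarrow> bool" where
  "on_down T u \<longleftrightarrow> (\<exists>m. Down m \<in> T \<and> u = times_z m)"

definition A_verts :: "tri set \<Rightarrow> mono set" where
  "A_verts T = {u. on_up T u \<and> \<not> on_down T u}"

definition E_verts :: "tri set \<Rightarrow> mono set" where
  "E_verts T = {u. on_down T u \<and> \<not> on_up T u}"

definition A_pt :: "tri set \<Rightarrow> nat \<Rightarrow> mono" where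
  "A_pt T i = rl_nth (A_verts T) i"

definition E_pt :: "tri set \<Rightarrow> nat \<Rightarrow> mono" where
  "E_pt T j = rl_nth (E_verts T) j"

text \<open>Identification of L(T) with a sub-lattice of Z^2: the vertex labeled x^a y^b z^c is the
  point (c, a).  Then the edge from m y to m z is an East step (1,0) and the edge from m x to
  m z is a Southeast step (1,-1).\<close>
fun lat_coord :: "mono \<Rightarrow> int \<times> int" where
  "lat_coord (a,b,c) = (int c, int a)"

text \<open>A lattice path is a list of steps: True = East (1,0), False = Southeast (1,-1).\<close>
definition path_end :: "int \<times> int \<Rightarrow> bool list \<Rightarrow> int \<times> int" where
  "path_end p ss = fold (\<lambda>s (x,y). if s then (x + 1, y) else (x + 1, y - 1)) ss p"

definition num_lattice_paths :: "int \<times> int \<Rightarrow> int \<times> int \<Rightarrow> nat" where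
  "num_lattice_paths p q = card {ss. path_end p ss = q}"

definition N_mat :: "tri set \<Rightarrow> int mat" where
  "N_mat T = mat (card (A_verts T)) (card (E_verts T))
     (\<lambda>(i,j). int (num_lattice_paths (lat_coord (A_pt T i)) (lat_coord (E_pt T j))))"

text \<open>The steps of the lattice paths determined by a tiling: a lozenge consisting of the
  downward triangle m and the upward triangle u = m x or u = m y joins the vertices u and m z.\<close>
definition lp_step :: "tri set set \<Rightarrow> (mono \<times> mono) set" where
  "lp_step \<tau> = {(u, times_z m) | u m. {Down m, Up u} \<in> \<tau> \<and> u \<noteq> times_z m}"

definition lp_perm :: "tri set \<Rightarrow> tri set set \<Rightarrow> nat \<Rightarrow> nat" where
  "lp_perm T \<tau> i = (if i < card (A_verts T)
      then (THE j. j < card (E_verts T) \<and> (A_pt T i, E_pt T j) \<in> (lp_step \<tau>)\<^sup>*) else i)"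

definition sgn_lp :: "tri set \<Rightarrow> tri set set \<Rightarrow> int" where
  "sgn_lp T \<tau> = sign (lp_perm T \<tau>)"

end

theory Submission
  imports Defs
begin

text \<open>Both matrices are minors of a pair of mutually inverse matrices indexed by all monomials of
  degree \<open>d - 1\<close>.  The matrix counting lattice paths between such monomials is inverted by
  \<open>1 - S\<close>, where \<open>S\<close> records single lattice steps; \<open>N(T)\<close> is its minor on rows \<open>A\<close> and columns
  \<open>E\<close>.  By Jacobi's complementary minor identity \<open>|det N(T)|\<close> is the absolute value of the minor
  of \<open>1 - S\<close> on the complementary index sets; because \<open>I\<close> is a monomial ideal that minor is
  block triangular with a unitriangular block, and the remaining block is \<open>Z(T)\<close> up to signs of
  rows and columns.

  For the signs, a tiling sends every upward triangle to the \<open>z\<close>-neighbour of the downward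
  triangle it is matched with; together with \<open>E\<^sub>j \<mapsto> A\<^sub>j\<close> this is a permutation whose sign,
  relative to a fixed reference bijection, is the perfect matching sign.  Its excursions away
  from the endpoints \<open>E\<close> are exactly the lattice paths of the tiling, so shortcutting them yields
  the lattice path permutation and changes the sign by \<open>(-1)\<^sup>k\<close>, \<open>k\<close> the number of moved
  triangles.  Every move raises the \<open>z\<close>-degree by one, so \<open>k\<close> does not depend on the tiling.\<close>

lemma revlex_less_irrefl: "\<not> revlex_less m m"
  by (cases m) auto

lemma revlex_less_trans: "revlex_less m1 m2 \<Longrightarrow> revlex_less m2 m3 \<Longrightarrow> revlex_less m1 m3"
  by (cases m1; cases m2; cases m3) auto

lemma revlex_less_linear: "m1 \<noteq> m2 \<Longrightarrow> revlex_less m1 m2 \<or> revlex_less m2 m1"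
  by (cases m1; cases m2) auto

definition rl_rank :: "mono set \<Rightarrow> mono \<Rightarrow> nat" where
  "rl_rank S m = card {m' \<in> S. revlex_less m' m}"

lemma rl_rank_strict_mono:
  assumes "finite S" "m \<in> S" "revlex_less m m'"
  shows "rl_rank S m < rl_rank S m'"
  unfolding rl_rank_def
proof (rule psubset_card_mono)
  show "{m' \<in> S. revlex_less m' m} \<subset> {m'' \<in> S. revlex_less m'' m'}"
    using assms revlex_less_trans revlex_less_irrefl by blast
qed (use assms in simp)

lemma bij_betw_rl_rank:
  assumes "finite S"
  shows "bij_betw (rl_rank S) S {0..<card S}"
proof -
  have inj: "inj_on (rl_rank S) S"
    by (rule inj_onI) (metis assms nat_neq_iff revlex_less_linear rl_rank_strict_mono)
  have "rl_rank S m < card S" if "m \<in> S" for m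
  proof -
    have "{m' \<in> S. revlex_less m' m} \<subset> S" using that revlex_less_irrefl by blast
    then show ?thesis unfolding rl_rank_def using assms psubset_card_mono by blast
  qed
  then have "rl_rank S ` S \<subseteq> {0..<card S}" by auto
  moreover have "card (rl_rank S ` S) = card {0..<card S}"
    using card_image[OF inj] by simp
  ultimately show ?thesis
    using inj by (simp add: bij_betw_def card_subset_eq)
qed

lemma rl_nth_eq_inv_rl_rank:
  assumes "finite S" "i < card S"
  shows "rl_nth S i = inv_into S (rl_rank S) i"
proof -
  note bij = bij_betw_rl_rank[OF assms(1)]
  have "i \<in> rl_rank S ` S" using bij assms(2) by (simp add: bij_betw_def)
  then have "inv_into S (rl_rank S) i \<in> S" "rl_rank S (inv_into S (rl_rank S) i) = i"
    by (auto intro: inv_into_into f_inv_into_f)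
  then show ?thesis
    unfolding rl_nth_def rl_rank_def[symmetric]
    by (intro the_equality conjI) (metis bij bij_betw_def inv_into_f_f)+
qed

lemma bij_betw_rl_nth:
  assumes "finite S"
  shows "bij_betw (rl_nth S) {0..<card S} S"
  using bij_betw_inv_into[OF bij_betw_rl_rank[OF assms]]
  by (rule bij_betw_cong[THEN iffD1, rotated]) (use assms rl_nth_eq_inv_rl_rank in auto)

lemma rl_nth_strict_mono:
  assumes "finite S" "i < j" "j < card S"
  shows "revlex_less (rl_nth S i) (rl_nth S j)"
proof -
  have rank: "rl_rank S (rl_nth S k) = k" if "k < card S" for k
    using that assms(1) f_inv_into_f[of k "rl_rank S" S] bij_betw_rl_rank[OF assms(1)]
    by (simp add: rl_nth_eq_inv_rl_rank bij_betw_def)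
  have "rl_nth S i \<noteq> rl_nth S j"
    using rank assms by (metis order.strict_trans nat_neq_iff)
  moreover have "rl_nth S j \<in> S"
    using bij_betw_rl_nth[OF assms(1)] assms(3) by (auto dest: bij_betwE)
  then have "\<not> revlex_less (rl_nth S j) (rl_nth S i)"
    using rl_rank_strict_mono[OF assms(1)] rank assms by (metis not_less_iff_gr_or_eq order.strict_trans)
  ultimately show ?thesis
    using revlex_less_linear by blast
qed

lemma path_end_eq:
  "path_end p ss = (fst p + int (length ss), snd p - int (length (filter Not ss)))"
  unfolding path_end_def by (induction ss arbitrary: p) (auto simp: case_prod_beta)

lemma path_end_Cons:
  "path_end p (s # ss) = path_end (if s then (fst p + 1, snd p) else (fst p + 1, snd p - 1)) ss"
  by (simp add: path_end_eq)

lemma finite_lattice_paths: "finite {ss. path_end p ss = q}"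
proof (rule finite_subset)
  show "{ss. path_end p ss = q} \<subseteq> {ss. length ss = nat (fst q - fst p)}"
    by (auto simp: path_end_eq)
qed (use finite_lists_length_eq[of "UNIV :: bool set"] in simp)

lemma num_lattice_paths_rec:
  "num_lattice_paths p q = of_bool (p = q)
     + num_lattice_paths (fst p + 1, snd p) q + num_lattice_paths (fst p + 1, snd p - 1) q"
proof -
  define S0 :: "bool list set" where "S0 = (if p = q then {[]} else {})"
  define S1 where "S1 = Cons True ` {ss. path_end (fst p + 1, snd p) ss = q}"
  define S2 where "S2 = Cons False ` {ss. path_end (fst p + 1, snd p - 1) ss = q}"
  have split: "{ss. path_end p ss = q} = S0 \<union> S1 \<union> S2"
  proof (rule Set.set_eqI)
    fix ss show "ss \<in> {ss. path_end p ss = q} \<longleftrightarrow> ss \<in> S0 \<union> S1 \<union> S2"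
    proof (cases ss)
      case (Cons s ss')
      then show ?thesis by (cases s) (auto simp: path_end_Cons S0_def S1_def S2_def)
    qed (auto simp: path_end_eq S0_def S1_def S2_def)
  qed
  have fin: "finite S0" "finite S1" "finite S2"
    using finite_lattice_paths by (auto simp: S0_def S1_def S2_def)
  have "card (S0 \<union> S1 \<union> S2) = card (S0 \<union> S1) + card S2"
    by (rule card_Un_disjoint) (use fin in \<open>auto simp: S0_def S1_def S2_def\<close>)
  also have "card (S0 \<union> S1) = card S0 + card S1"
    by (rule card_Un_disjoint) (use fin in \<open>auto simp: S0_def S1_def S2_def\<close>)
  finally have "card (S0 \<union> S1 \<union> S2) = card S0 + card S1 + card S2" .
  moreover have "card S1 = num_lattice_paths (fst p + 1, snd p) q"
    unfolding num_lattice_paths_def S1_def by (rule card_image) simp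
  moreover have "card S2 = num_lattice_paths (fst p + 1, snd p - 1) q"
    unfolding num_lattice_paths_def S2_def by (rule card_image) simp
  ultimately show ?thesis
    using split unfolding num_lattice_paths_def by (simp add: S0_def)
qed

lemma num_lattice_paths_nonzeroD:
  assumes "num_lattice_paths p q \<noteq> 0"
  shows "snd q \<le> snd p" and "fst p + snd p \<le> fst q + snd q"
proof -
  obtain ss where "path_end p ss = q"
    using assms unfolding num_lattice_paths_def by fastforce
  then show "snd q \<le> snd p" "fst p + snd p \<le> fst q + snd q"
    using length_filter_le[of Not ss] by (auto simp: path_end_eq)
qed

text \<open>Matrices indexed by finite sets of monomials are handled through their entry functions;
  a concrete matrix arises by enumerating rows and columns.\<close>

definition enum_mat :: "('a \<Rightarrow> 'b \<Rightarrow> 'c) \<Rightarrow> (nat \<Rightarrow> 'a) \<Rightarrow> (nat \<Rightarrow> 'b) \<Rightarrow> nat \<Rightarrow> nat \<Rightarrow> 'c mat"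
  where "enum_mat f r c n m = mat n m (\<lambda>(i, j). f (r i) (c j))"

definition enum_append :: "(nat \<Rightarrow> 'a) \<Rightarrow> nat \<Rightarrow> (nat \<Rightarrow> 'a) \<Rightarrow> nat \<Rightarrow> 'a"
  where "enum_append r1 n1 r2 i = (if i < n1 then r1 i else r2 (i - n1))"

lemma enum_mat_carrier [simp]: "enum_mat f r c n m \<in> carrier_mat n m"
  and dim_row_enum_mat [simp]: "dim_row (enum_mat f r c n m) = n"
  and dim_col_enum_mat [simp]: "dim_col (enum_mat f r c n m) = m"
  and index_enum_mat [simp]: "i < n \<Longrightarrow> j < m \<Longrightarrow> enum_mat f r c n m $$ (i, j) = f (r i) (c j)"
  by (auto simp: enum_mat_def)

lemma enum_mat_enum_append:
  "enum_mat f (enum_append r1 n1 r2) (enum_append c1 m1 c2) (n1 + n2) (m1 + m2) =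
   four_block_mat (enum_mat f r1 c1 n1 m1) (enum_mat f r1 c2 n1 m2)
                  (enum_mat f r2 c1 n2 m1) (enum_mat f r2 c2 n2 m2)"
  by (rule eq_matI) (auto simp: enum_append_def)

lemma bij_betw_enum_append:
  assumes "bij_betw r1 {0..<n1} R1" "bij_betw r2 {0..<n2} R2" "R1 \<inter> R2 = {}"
  shows "bij_betw (enum_append r1 n1 r2) {0..<n1 + n2} (R1 \<union> R2)"
proof -
  have "bij_betw (enum_append r1 n1 r2) {0..<n1} R1"
    using assms(1) by (rule bij_betw_cong[THEN iffD1, rotated]) (auto simp: enum_append_def)
  moreover have "bij_betw (\<lambda>i. i - n1) {n1..<n1 + n2} {0..<n2}"
    by (rule bij_betw_byWitness[where f' = "\<lambda>i. i + n1"]) auto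
  then have "bij_betw (r2 \<circ> (\<lambda>i. i - n1)) {n1..<n1 + n2} R2"
    using assms(2) by (rule bij_betw_trans)
  then have "bij_betw (enum_append r1 n1 r2) {n1..<n1 + n2} R2"
    by (rule bij_betw_cong[THEN iffD1, rotated]) (auto simp: enum_append_def)
  moreover have "{0..<n1 + n2} = {0..<n1} \<union> {n1..<n1 + n2}" by auto
  ultimately show ?thesis
    using bij_betw_combine assms(3) by metis
qed

lemma enum_mat_mult:
  fixes f g :: "'a \<Rightarrow> 'a \<Rightarrow> 'c :: comm_semiring_0"
  assumes "bij_betw s {0..<k} S"
  shows "enum_mat f r s n k * enum_mat g s c k m = enum_mat (\<lambda>u v. \<Sum>w\<in>S. f u w * g w v) r c n m"
proof (rule eq_matI)
  fix i j assume "i < dim_row (enum_mat (\<lambda>u v. \<Sum>w\<in>S. f u w * g w v) r c n m)"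
    "j < dim_col (enum_mat (\<lambda>u v. \<Sum>w\<in>S. f u w * g w v) r c n m)"
  then have ij: "i < n" "j < m" by simp_all
  have "(enum_mat f r s n k * enum_mat g s c k m) $$ (i, j) = (\<Sum>l<k. f (r i) (s l) * g (s l) (c j))"
    using ij by (auto simp: scalar_prod_def lessThan_atLeast0 intro!: sum.cong)
  also have "\<dots> = (\<Sum>w\<in>S. f (r i) w * g w (c j))"
    using sum.reindex_bij_betw[OF assms, of "\<lambda>w. f (r i) w * g w (c j)"]
    by (simp add: lessThan_atLeast0)
  finally show "(enum_mat f r s n k * enum_mat g s c k m) $$ (i, j) =
      enum_mat (\<lambda>u v. \<Sum>w\<in>S. f u w * g w v) r c n m $$ (i, j)"
    using ij by simp
qed simp_all

lemma enum_mat_mult_add_split: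
  fixes f g :: "'a \<Rightarrow> 'a \<Rightarrow> 'c :: comm_semiring_0"
  assumes "finite S" "A \<subseteq> S" "bij_betw s1 {0..<k1} A" "bij_betw s2 {0..<k2} (S - A)"
  shows "enum_mat f r s1 n k1 * enum_mat g s1 c k1 m + enum_mat f r s2 n k2 * enum_mat g s2 c k2 m =
    enum_mat (\<lambda>u v. \<Sum>w\<in>S. f u w * g w v) r c n m"
  unfolding enum_mat_mult[OF assms(3)] enum_mat_mult[OF assms(4)]
  by (rule eq_matI) (auto simp: sum.subset_diff[OF assms(2,1)] add.commute)

lemma transpose_enum_mat: "transpose_mat (enum_mat f r c n m) = enum_mat (\<lambda>a b. f b a) c r m n"
  by (rule eq_matI) auto

lemma abs_det_enum_mat_reindex_rows:
  fixes f :: "'a \<Rightarrow> 'b \<Rightarrow> int"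
  assumes r: "bij_betw r {0..<n} R" and r': "bij_betw r' {0..<n} R"
  shows "\<bar>det (enum_mat f r c n n)\<bar> = \<bar>det (enum_mat f r' c n n)\<bar>"
proof -
  define p where "p i = (if i < n then inv_into {0..<n} r (r' i) else i)" for i
  have "bij_betw (inv_into {0..<n} r \<circ> r') {0..<n} {0..<n}"
    using bij_betw_trans[OF r' bij_betw_inv_into[OF r]] .
  then have "bij_betw p {0..<n} {0..<n}"
    by (rule bij_betw_cong[THEN iffD1, rotated]) (auto simp: p_def)
  then have p: "p permutes {0..<n}"
    by (rule bij_imp_permutes) (auto simp: p_def)
  have "r (p i) = r' i" if "i < n" for i
  proof -
    have "r' i \<in> r ` {0..<n}" using that r r' by (auto simp: bij_betw_def)
    then show ?thesis by (simp add: p_def that f_inv_into_f)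
  qed
  moreover have "p i < n" if "i < n" for i
    using p that permutes_in_image by fastforce
  ultimately have "enum_mat f r' c n n = mat n n (\<lambda>(i, j). enum_mat f r c n n $$ (p i, j))"
    by (intro eq_matI) auto
  then have "det (enum_mat f r' c n n) = signof p * det (enum_mat f r c n n)"
    using det_permute_rows[OF enum_mat_carrier[of f r c n n] p] by simp
  then show ?thesis
    by (simp add: abs_mult)
qed

lemma abs_det_enum_mat_reindex:
  fixes f :: "'a \<Rightarrow> 'b \<Rightarrow> int"
  assumes "bij_betw r {0..<n} R" "bij_betw r' {0..<n} R"
    and "bij_betw c {0..<n} C" "bij_betw c' {0..<n} C"
  shows "\<bar>det (enum_mat f r c n n)\<bar> = \<bar>det (enum_mat f r' c' n n)\<bar>"
proof -
  have transp: "det (enum_mat h r c n n) = det (enum_mat (\<lambda>a b. h b a) c r n n)"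
    for h :: "'a \<Rightarrow> 'b \<Rightarrow> int" and r c
    by (metis det_transpose enum_mat_carrier transpose_enum_mat)
  have "\<bar>det (enum_mat f r c n n)\<bar> = \<bar>det (enum_mat f r' c n n)\<bar>"
    using assms(1,2) by (rule abs_det_enum_mat_reindex_rows)
  also have "\<dots> = \<bar>det (enum_mat (\<lambda>a b. f b a) c' r' n n)\<bar>"
    unfolding transp using assms(3,4) by (rule abs_det_enum_mat_reindex_rows)
  also have "\<dots> = \<bar>det (enum_mat f r' c' n n)\<bar>"
    unfolding transp ..
  finally show ?thesis .
qed

lemma det_scale_rows_cols:
  assumes "A \<in> carrier_mat n n"
  shows "det (mat n n (\<lambda>(i, j). s i * t j * A $$ (i, j))) =
    (\<Prod>i<n. s i) * (\<Prod>j<n. t j) * (det A :: 'a :: comm_ring_1)"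
proof -
  have "(\<Prod>i = 0..<n. s i * t (p i) * A $$ (i, p i)) =
      (\<Prod>i<n. s i) * (\<Prod>j<n. t j) * (\<Prod>i = 0..<n. A $$ (i, p i))"
    if "p permutes {0..<n}" for p
    using prod.permute[OF that, of t]
    by (simp add: prod.distrib atLeast0LessThan comp_def)
  then show ?thesis
    using assms unfolding det_def'[OF assms]
    by (subst det_def'[of _ n]) (auto simp: sum_distrib_left ac_simps intro!: sum.cong)
qed

section \<open>Jacobi's complementary minor identity\<close>

lemma enum_mat_of_bool_eq_one:
  "inj_on r {0..<n} \<Longrightarrow> enum_mat (\<lambda>u v. of_bool (u = v)) r r n n = (1\<^sub>m n :: 'c :: semiring_1 mat)"
  by (rule eq_matI) (auto simp: inj_on_eq_iff)

lemma enum_mat_of_bool_eq_zero: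
  "r ` {0..<n} \<inter> c ` {0..<m} = {} \<Longrightarrow>
    enum_mat (\<lambda>u v. of_bool (u = v)) r c n m = (0\<^sub>m n m :: 'c :: semiring_1 mat)"
  by (rule eq_matI) (auto simp: disjoint_iff, metis atLeastLessThan_iff image_eqI zero_le)

lemma enum_mat_mult_inverse:
  fixes f g :: "'a \<Rightarrow> 'a \<Rightarrow> 'c :: comm_semiring_1"
  assumes inverse: "\<And>u v. u \<in> S \<Longrightarrow> v \<in> S \<Longrightarrow> (\<Sum>w\<in>S. f u w * g w v) = of_bool (u = v)"
    and "bij_betw s {0..<k} S" "r ` {0..<n} \<subseteq> S" "c ` {0..<m} \<subseteq> S"
  shows "enum_mat f r s n k * enum_mat g s c k m = enum_mat (\<lambda>u v. of_bool (u = v)) r c n m"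
  unfolding enum_mat_mult[OF assms(2)] using assms(3,4)
  by (intro eq_matI) (auto simp: inverse image_subset_iff)

lemma enum_mat_mult_inverse_split:
  fixes f g :: "'a \<Rightarrow> 'a \<Rightarrow> 'c :: comm_semiring_1"
  assumes inverse: "\<And>u v. u \<in> S \<Longrightarrow> v \<in> S \<Longrightarrow> (\<Sum>w\<in>S. f u w * g w v) = of_bool (u = v)"
    and "finite S" "A \<subseteq> S" "bij_betw s1 {0..<k1} A" "bij_betw s2 {0..<k2} (S - A)"
    and "r ` {0..<n} \<subseteq> S" "c ` {0..<m} \<subseteq> S"
  shows "enum_mat f r s1 n k1 * enum_mat g s1 c k1 m + enum_mat f r s2 n k2 * enum_mat g s2 c k2 m =
    enum_mat (\<lambda>u v. of_bool (u = v)) r c n m"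
  unfolding enum_mat_mult_add_split[OF assms(2-5)] using assms(6,7)
  by (intro eq_matI) (auto simp: inverse image_subset_iff)

lemma abs_det_enum_mat_inverse:
  fixes f g :: "'a \<Rightarrow> 'a \<Rightarrow> int"
  assumes inverse: "\<And>u v. u \<in> S \<Longrightarrow> v \<in> S \<Longrightarrow> (\<Sum>w\<in>S. f u w * g w v) = of_bool (u = v)"
    and R: "bij_betw R {0..<n} S" and C: "bij_betw C {0..<n} S"
  shows "\<bar>det (enum_mat f R C n n)\<bar> = 1"
proof -
  have "enum_mat f R C n n * enum_mat g C R n n = enum_mat (\<lambda>u v. of_bool (u = v)) R R n n"
    by (rule enum_mat_mult_inverse[OF inverse C]) (use R in \<open>auto simp: bij_betw_def\<close>)
  also have "\<dots> = 1\<^sub>m n"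
    by (rule enum_mat_of_bool_eq_one) (use R in \<open>simp add: bij_betw_def\<close>)
  finally have "enum_mat f R C n n * enum_mat g C R n n = 1\<^sub>m n" .
  then have "det (enum_mat f R C n n) * det (enum_mat g C R n n) = 1"
    by (metis det_mult det_one enum_mat_carrier)
  then show ?thesis
    by (metis abs_one abs_zmult_eq_1)
qed


lemma abs_det_complementary_minor:
  fixes f g :: "'a \<Rightarrow> 'a \<Rightarrow> int"
  assumes S: "finite S" "A \<subseteq> S" "E \<subseteq> S"
    and inverse: "\<And>u v. u \<in> S \<Longrightarrow> v \<in> S \<Longrightarrow> (\<Sum>w\<in>S. f u w * g w v) = of_bool (u = v)"
    and eA: "bij_betw eA {0..<k} A" and eE: "bij_betw eE {0..<k} E"
    and eA': "bij_betw eA' {0..<l} (S - A)" and eE': "bij_betw eE' {0..<l} (S - E)"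
  shows "\<bar>det (enum_mat g eA eE k k)\<bar> = \<bar>det (enum_mat f eE' eA' l l)\<bar>"
proof -
  define M where "M = enum_mat f (enum_append eE k eE') (enum_append eA k eA') (k + l) (k + l)"
  define Y where "Y = four_block_mat (enum_mat g eA eE k k) (0\<^sub>m k l) (enum_mat g eA' eE l k) (1\<^sub>m l)"
  have "bij_betw (enum_append eE k eE') {0..<k + l} S"
    using bij_betw_enum_append[OF eE eE'] S by (simp add: Un_absorb1)
  moreover have "bij_betw (enum_append eA k eA') {0..<k + l} S"
    using bij_betw_enum_append[OF eA eA'] S by (simp add: Un_absorb1)
  ultimately have det_M: "\<bar>det M\<bar> = 1"
    unfolding M_def using inverse by (rule abs_det_enum_mat_inverse[rotated])
  have eE_range: "eE ` {0..<k} = E" "inj_on eE {0..<k}" and eE'_range: "eE' ` {0..<l} = S - E"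
    using eE eE' by (simp_all add: bij_betw_def)
  then have disj: "eE' ` {0..<l} \<inter> eE ` {0..<k} = {}"
    by auto
  note block = enum_mat_mult_inverse_split[OF inverse S(1,2) eA eA']
  have "M * Y = four_block_mat
      (enum_mat f eE eA k k * enum_mat g eA eE k k + enum_mat f eE eA' k l * enum_mat g eA' eE l k)
      (enum_mat f eE eA k k * 0\<^sub>m k l + enum_mat f eE eA' k l * 1\<^sub>m l)
      (enum_mat f eE' eA l k * enum_mat g eA eE k k + enum_mat f eE' eA' l l * enum_mat g eA' eE l k)
      (enum_mat f eE' eA l k * 0\<^sub>m k l + enum_mat f eE' eA' l l * 1\<^sub>m l)"
    unfolding M_def Y_def enum_mat_enum_append by (rule mult_four_block_mat) auto
  also have "\<dots> = four_block_mat (1\<^sub>m k) (enum_mat f eE eA' k l) (0\<^sub>m l k) (enum_mat f eE' eA' l l)"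
    using S(3) eE_range eE'_range
    by (simp add: block enum_mat_of_bool_eq_one enum_mat_of_bool_eq_zero[OF disj])
  finally have "det (M * Y) = det (enum_mat f eE' eA' l l)"
    by (simp add: det_four_block_mat_lower_left_zero[of _ k _ l])
  moreover have "det (M * Y) = det M * det Y"
    unfolding M_def Y_def enum_mat_enum_append by (rule det_mult[of _ "k + l"]) auto
  moreover have "det Y = det (enum_mat g eA eE k k)"
    unfolding Y_def by (subst det_four_block_mat_upper_right_zero[of _ k _ l]) auto
  ultimately show ?thesis
    using det_M by (metis abs_mult mult_1)
qed

section \<open>Signs of permutations with monotone excursions\<close>

definition excursions :: "'a set \<Rightarrow> 'a set \<Rightarrow> ('a \<Rightarrow> 'a) \<Rightarrow> ('a \<times> 'a) set"
  where "excursions S C h = {(x, h x) | x. x \<in> S - C \<and> h x \<noteq> x}"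

lemma excursions_iff: "(x, y) \<in> excursions S C h \<longleftrightarrow> x \<in> S - C \<and> h x \<noteq> x \<and> y = h x"
  by (auto simp: excursions_def)

lemma single_valued_excursions: "single_valued (excursions S C h)"
  by (auto simp: single_valued_def excursions_iff)

lemma rtrancl_excursions_from_base: "(c, b) \<in> (excursions S C h)\<^sup>* \<Longrightarrow> c \<in> C \<Longrightarrow> b = c"
  by (erule converse_rtranclE) (auto simp: excursions_iff)

lemma rtrancl_excursions_unique_base:
  assumes "(x, b) \<in> (excursions S C h)\<^sup>*" "(x, b') \<in> (excursions S C h)\<^sup>*" "b \<in> C" "b' \<in> C"
  shows "b = b'"
  using single_valued_confluent[OF single_valued_excursions assms(1,2)] assms(3,4)
    rtrancl_excursions_from_base by metis

lemma rtrancl_excursions_unique_source: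
  assumes "inj h" "(a, e) \<in> (excursions S C h)\<^sup>*" "(a', e) \<in> (excursions S C h)\<^sup>*"
    and "a \<notin> Range (excursions S C h)" "a' \<notin> Range (excursions S C h)"
  shows "a = a'"
proof -
  have "single_valued ((excursions S C h)\<inverse>)"
    using assms(1) by (auto simp: single_valued_def excursions_iff inj_eq)
  moreover have "(e, a) \<in> ((excursions S C h)\<inverse>)\<^sup>*" "(e, a') \<in> ((excursions S C h)\<inverse>)\<^sup>*"
    using assms(2,3) by (simp_all add: rtrancl_converse)
  ultimately have "(a, a') \<in> ((excursions S C h)\<inverse>)\<^sup>* \<or> (a', a) \<in> ((excursions S C h)\<inverse>)\<^sup>*"
    by (rule single_valued_confluent)
  moreover have "b = b'" if "(b, b') \<in> ((excursions S C h)\<inverse>)\<^sup>*" "b \<notin> Range (excursions S C h)"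
    for b b'
    using that by (cases rule: converse_rtranclE) auto
  ultimately show ?thesis
    using assms(4,5) by metis
qed

lemma rtrancl_excursions_exit:
  assumes "x \<in> S - C" "h x \<in> C" "(x, b) \<in> (excursions S C h)\<^sup>*" "b \<in> C"
  shows "b = h x"
proof -
  have "(x, h x) \<in> excursions S C h"
    using assms(1,2) by (auto simp: excursions_iff)
  then have "(x, h x) \<in> (excursions S C h)\<^sup>*" by blast
  then show ?thesis
    using rtrancl_excursions_unique_base[OF assms(3) _ assms(4,2)] by blast
qed

text \<open>The permutation \<open>bypass h x\<close> removes \<open>x\<close> from its cycle in \<open>h\<close>.\<close>

definition bypass :: "('a \<Rightarrow> 'a) \<Rightarrow> 'a \<Rightarrow> 'a \<Rightarrow> 'a"
  where "bypass h x = h \<circ> Transposition.transpose (Hilbert_Choice.inv h x) x"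

lemma bypass_apply:
  assumes "bij h"
  shows "bypass h x y = (if y = x then x else if h y = x then h x else h y)"
  using assms bij_inv_eq_iff[OF assms]
  by (auto simp: bypass_def Transposition.transpose_def bij_is_surj surj_f_inv_f)

lemma permutes_bypass: "h permutes S \<Longrightarrow> x \<in> S \<Longrightarrow> bypass h x permutes S"
  unfolding bypass_def
  by (metis permutes_compose permutes_inv permutes_in_image permutes_swap_id)

lemma sign_bypass:
  assumes "h permutes S" "finite S" "x \<in> S" "h x \<noteq> x"
  shows "sign (bypass h x) = - sign h"
proof -
  have "Hilbert_Choice.inv h x \<noteq> x"
    using assms(1,4) by (metis permutes_inverses(1))
  moreover have "permutation h"
    using assms(1,2) permutation_permutes by blast
  ultimately show ?thesis
    unfolding bypass_def by (simp add: sign_compose permutation_swap_id sign_swap_id)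
qed

lemma rtrancl_excursions_bypass:
  assumes h: "h permutes S" and x: "x \<in> S - C" "h x \<in> C"
    and "(a, b) \<in> (excursions S C h)\<^sup>*" "b \<in> C" "a \<noteq> x"
  shows "(a, b) \<in> (excursions S C (bypass h x))\<^sup>*"
  using assms(4-)
proof (induction rule: converse_rtrancl_induct)
  case (step a a')
  then have a: "a \<in> S - C" "h a \<noteq> a" "a' = h a"
    by (auto simp: excursions_iff)
  have bij: "bij h" using h by (rule permutes_bij)
  show ?case
  proof (cases "a' = x")
    case True
    then have "b = h x"
      using step.hyps(2) step.prems(1) x rtrancl_excursions_exit by metis
    then have "(a, b) \<in> excursions S C (bypass h x)"
      using a True step.prems x by (auto simp: excursions_iff bypass_apply[OF bij])
    then show ?thesis by blast
  next
    case False
    then have "(a, a') \<in> excursions S C (bypass h x)"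
      using a step.prems by (auto simp: excursions_iff bypass_apply[OF bij])
    then show ?thesis
      using step.IH step.prems(1) False by (meson converse_rtrancl_into_rtrancl)
  qed
qed simp

lemma exit_point_exists:
  fixes \<rho> :: "'a \<Rightarrow> nat"
  assumes "finite S" "h permutes S" and mono: "\<And>x. x \<in> S - C \<Longrightarrow> h x \<noteq> x \<Longrightarrow> \<rho> x < \<rho> (h x)"
    and "{x \<in> S - C. h x \<noteq> x} \<noteq> {}"
  obtains x where "x \<in> S - C" "h x \<noteq> x" "h x \<in> C"
proof -
  define X where "X = {x \<in> S - C. h x \<noteq> x}"
  have "finite X" "X \<noteq> {}"
    using assms(1,4) by (simp_all add: X_def)
  then have "Max (\<rho> ` X) \<in> \<rho> ` X"
    by simp
  then obtain x where x: "x \<in> X" "\<rho> x = Max (\<rho> ` X)"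
    by auto
  have "h x \<in> C"
  proof (rule ccontr)
    assume "h x \<notin> C"
    moreover have "h (h x) \<noteq> h x" "h x \<in> S"
      using x assms(2) by (auto simp: X_def permutes_in_image dest: permutes_inj[THEN injD])
    ultimately have "\<rho> (h x) \<le> \<rho> x"
      using x \<open>finite X\<close> by (simp add: X_def)
    moreover have "\<rho> x < \<rho> (h x)"
      using mono x(1) by (simp add: X_def)
    ultimately show False
      by simp
  qed
  then show ?thesis
    using that x by (auto simp: X_def)
qed

lemma bypass_exit_monotone:
  fixes \<rho> :: "'a \<Rightarrow> nat"
  assumes "bij h" and mono: "\<And>x. x \<in> S - C \<Longrightarrow> h x \<noteq> x \<Longrightarrow> \<rho> x < \<rho> (h x)"
    and x: "x \<in> S - C" "h x \<noteq> x"
    and y: "y \<in> S - C" "bypass h x y \<noteq> y"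
  shows "\<rho> y < \<rho> (bypass h x y)"
proof (cases "h y = x")
  case True
  then have "y \<noteq> x" "h y \<noteq> y"
    using y by (auto simp: bypass_apply[OF assms(1)])
  then have "\<rho> y < \<rho> x"
    using mono[OF y(1)] True by simp
  also have "\<rho> x < \<rho> (h x)"
    using mono[OF x] .
  finally show ?thesis
    using True \<open>y \<noteq> x\<close> by (simp add: bypass_apply[OF assms(1)])
next
  case False
  then show ?thesis
    using y mono[of y] by (auto simp: bypass_apply[OF assms(1)] split: if_splits)
qed

lemma bypass_exit_returns:
  assumes h: "h permutes S" and "g permutes C" and x: "x \<in> S - C" "h x \<in> C"
    and c: "c \<in> C" "(h c, g c) \<in> (excursions S C h)\<^sup>*"
  shows "(bypass h x c, g c) \<in> (excursions S C (bypass h x))\<^sup>*"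
proof -
  have bij: "bij h" using h by (rule permutes_bij)
  have "g c \<in> C" using assms(2) c(1) by (simp add: permutes_in_image)
  show ?thesis
  proof (cases "h c = x")
    case True
    then have "g c = h x"
      using c(2) \<open>g c \<in> C\<close> x rtrancl_excursions_exit by metis
    moreover have "c \<noteq> x"
      using c(1) x by auto
    ultimately show ?thesis
      using True by (simp add: bypass_apply[OF bij])
  next
    case False
    moreover have "c \<noteq> x"
      using c(1) x by auto
    ultimately show ?thesis
      using rtrancl_excursions_bypass[OF h x c(2) \<open>g c \<in> C\<close> False]
      by (simp add: bypass_apply[OF bij])
  qed
qed

text \<open>If every point outside \<open>C\<close> moved by \<open>h\<close> increases the potential \<open>\<rho>\<close>, then the cycles of
  \<open>h\<close> are the cycles of \<open>g\<close> with excursions outside \<open>C\<close> inserted; every point on an excursion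
  contributes a transposition.\<close>

lemma sign_eq_by_excursions:
  fixes \<rho> :: "'a \<Rightarrow> nat"
  assumes "finite S" "C \<subseteq> S" "g permutes C"
  shows "h permutes S \<Longrightarrow> (\<And>x. x \<in> S - C \<Longrightarrow> h x \<noteq> x \<Longrightarrow> \<rho> x < \<rho> (h x))
    \<Longrightarrow> (\<And>c. c \<in> C \<Longrightarrow> (h c, g c) \<in> (excursions S C h)\<^sup>*)
    \<Longrightarrow> sign h = (-1) ^ card {x \<in> S - C. h x \<noteq> x} * sign g"
proof (induction "card {x \<in> S - C. h x \<noteq> x}" arbitrary: h)
  case 0
  have moved: "{x \<in> S - C. h x \<noteq> x} = {}"
    using assms(1) 0(1)[symmetric] by simp
  then have "excursions S C h = {}"
    by (auto simp: excursions_def)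
  then have "h y = g y" for y
    using 0(4)[of y] moved permutes_not_in[OF 0(2), of y] permutes_not_in[OF assms(3), of y]
    by (cases "y \<in> C"; cases "y \<in> S") auto
  then show ?case
    unfolding moved by auto
next
  case (Suc n)
  have "{x \<in> S - C. h x \<noteq> x} \<noteq> {}"
    using Suc(2) by (metis card.empty nat.distinct(1))
  then obtain x where x: "x \<in> S - C" "h x \<noteq> x" "h x \<in> C"
    using exit_point_exists[where \<rho> = \<rho> and C = C, OF assms(1) Suc(3,4)] by blast
  define h' where "h' = bypass h x"
  have bij: "bij h" using Suc(3) by (rule permutes_bij)
  have "{y \<in> S - C. h' y \<noteq> y} = {y \<in> S - C. h y \<noteq> y} - {x}"
    using x by (auto simp: h'_def bypass_apply[OF bij])
  then have card_moved': "card {y \<in> S - C. h' y \<noteq> y} = n"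
    using Suc(2) x assms(1) by simp
  have "sign h' = (-1) ^ n * sign g"
    unfolding card_moved'[symmetric]
  proof (rule Suc(1))
    show "h' permutes S"
      unfolding h'_def using Suc(3) by (rule permutes_bypass) (use x in simp)
    show "\<rho> y < \<rho> (h' y)" if "y \<in> S - C" "h' y \<noteq> y" for y
      using bypass_exit_monotone[where \<rho> = \<rho> and S = S and C = C, OF bij Suc(4) x(1,2)]
        that[unfolded h'_def] by (simp add: h'_def)
    show "(h' c, g c) \<in> (excursions S C h')\<^sup>*" if "c \<in> C" for c
      unfolding h'_def using Suc(3) assms(3) x(1,3) that Suc(5)[OF that] by (rule bypass_exit_returns)
  qed (use card_moved' in simp)
  moreover have "sign h = - sign h'"
    unfolding h'_def using sign_bypass[OF Suc(3) assms(1)] x by simp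
  ultimately show ?case
    unfolding Suc(2)[symmetric] by simp
qed

lemma up_labels_T_region: "up_labels (T_region d I) = {u. mdeg u + 1 = d \<and> u \<notin> I}"
  by (auto simp: up_labels_def T_region_def tri_region_def)

lemma down_labels_T_region: "down_labels (T_region d I) = {m. mdeg m + 2 = d \<and> m \<notin> I}"
  by (auto simp: down_labels_def T_region_def tri_region_def)

lemma finite_mdeg_eq: "finite {u :: mono. mdeg u + k = d}"
  by (rule finite_subset[of _ "{0..d} \<times> {0..d} \<times> {0..d}"]) auto

lemma finite_up_labels_T_region: "finite (up_labels (T_region d I))"
  unfolding up_labels_T_region by (rule finite_subset[OF _ finite_mdeg_eq[of 1 d]]) auto

lemma finite_down_labels_T_region: "finite (down_labels (T_region d I))"
  unfolding down_labels_T_region by (rule finite_subset[OF _ finite_mdeg_eq[of 2 d]]) auto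

lemma mdeg_times [simp]:
  "mdeg (times_x m) = Suc (mdeg m)" "mdeg (times_y m) = Suc (mdeg m)" "mdeg (times_z m) = Suc (mdeg m)"
  by (cases m; simp)+

lemma inj_times_z: "inj times_z"
proof (rule injI)
  fix m m' :: mono
  show "times_z m = times_z m' \<Longrightarrow> m = m'" by (cases m; cases m') auto
qed

lemma A_verts_eq: "A_verts T = up_labels T - times_z ` down_labels T"
  unfolding A_verts_def on_up_def on_down_def up_labels_def down_labels_def by blast

lemma E_verts_eq: "E_verts T = times_z ` down_labels T - up_labels T"
  unfolding E_verts_def on_up_def on_down_def up_labels_def down_labels_def by blast

lemma shares_edge_Down_Up_iff:
  "shares_edge (Down m) (Up u) \<longleftrightarrow> u = times_x m \<or> u = times_y m \<or> u = times_z m"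
  by (auto simp: shares_edge_def)

lemma lozenge_Down_Up:
  assumes "lozenge L"
  obtains m u where "L = {Down m, Up u}" "shares_edge (Down m) (Up u)"
proof -
  obtain t t' where "shares_edge t t'" "L = {t, t'}"
    using assms by (auto simp: lozenge_def)
  then show ?thesis
    using that unfolding shares_edge_def by (auto simp: insert_commute)
qed

lemma Down_Up_eq_iff: "{Down m, Up u} = {Down m', Up u'} \<longleftrightarrow> m = m' \<and> u = u'"
  by (auto simp: doubleton_eq_iff)

section \<open>The inverse of the lattice path matrix\<close>

definition lattice_step :: "mono \<Rightarrow> mono \<Rightarrow> bool"
  where "lattice_step u w \<longleftrightarrow> (\<exists>m. w = times_z m \<and> (u = times_x m \<or> u = times_y m))"

definition path_count :: "mono \<Rightarrow> mono \<Rightarrow> int"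
  where "path_count u v = int (num_lattice_paths (lat_coord u) (lat_coord v))"

definition path_count_inv :: "mono \<Rightarrow> mono \<Rightarrow> int"
  where "path_count_inv u w = of_bool (u = w) - of_bool (lattice_step u w)"

lemma lattice_step_iff:
  "lattice_step (a, b, c) w \<longleftrightarrow> (0 < a \<and> w = (a - 1, b, c + 1)) \<or> (0 < b \<and> w = (a, b - 1, c + 1))"
proof
  assume "lattice_step (a, b, c) w"
  then obtain m where "w = times_z m" "(a, b, c) = times_x m \<or> (a, b, c) = times_y m"
    by (auto simp: lattice_step_def)
  then show "(0 < a \<and> w = (a - 1, b, c + 1)) \<or> (0 < b \<and> w = (a, b - 1, c + 1))"
    by (cases m) auto
next
  assume "(0 < a \<and> w = (a - 1, b, c + 1)) \<or> (0 < b \<and> w = (a, b - 1, c + 1))"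
  then show "lattice_step (a, b, c) w"
  proof
    assume "0 < a \<and> w = (a - 1, b, c + 1)"
    then show ?thesis
      unfolding lattice_step_def by (intro exI[of _ "(a - 1, b, c)"]) auto
  next
    assume "0 < b \<and> w = (a, b - 1, c + 1)"
    then show ?thesis
      unfolding lattice_step_def by (intro exI[of _ "(a, b - 1, c)"]) auto
  qed
qed

lemma lattice_step_revlex_less: "lattice_step u w \<Longrightarrow> revlex_less w u"
  by (cases u) (auto simp: lattice_step_iff)

lemma path_count_inv_self [simp]: "path_count_inv u u = 1"
proof -
  have "\<not> lattice_step u u"
    using lattice_step_revlex_less revlex_less_irrefl by blast
  then show ?thesis by (simp add: path_count_inv_def)
qed

lemma path_count_inv_eq_0_if_revlex_less:
  assumes "revlex_less u w"
  shows "path_count_inv u w = 0"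
proof -
  have "u \<noteq> w" "\<not> lattice_step u w"
    using assms lattice_step_revlex_less revlex_less_trans revlex_less_irrefl by blast+
  then show ?thesis by (simp add: path_count_inv_def)
qed

lemma sum_lattice_step_path_count:
  assumes u: "mdeg (a, b, c) + 1 = d"
  shows "(\<Sum>w\<in>{w. mdeg w + 1 = d}. of_bool (lattice_step (a, b, c) w) * path_count w v) =
    (if 0 < a then path_count (a - 1, b, c + 1) v else 0) + (if 0 < b then path_count (a, b - 1, c + 1) v else 0)"
proof -
  define V where "V = {w :: mono. mdeg w + 1 = d}"
  have "finite V"
    using finite_mdeg_eq[of 1 d] by (simp add: V_def)
  have step: "of_bool (lattice_step (a, b, c) w) * p =
      (if 0 < a \<and> w = (a - 1, b, c + 1) then p else 0) + (if 0 < b \<and> w = (a, b - 1, c + 1) then p else 0)"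
    for w and p :: int
    by (auto simp: lattice_step_iff)
  have "(\<Sum>w\<in>V. if 0 < a \<and> w = (a - 1, b, c + 1) then path_count w v else 0) =
      (if 0 < a then path_count (a - 1, b, c + 1) v else 0)"
    using \<open>finite V\<close> u by (cases "0 < a") (simp_all add: sum.delta' V_def)
  moreover have "(\<Sum>w\<in>V. if 0 < b \<and> w = (a, b - 1, c + 1) then path_count w v else 0) =
      (if 0 < b then path_count (a, b - 1, c + 1) v else 0)"
    using \<open>finite V\<close> u by (cases "0 < b") (simp_all add: sum.delta' V_def)
  ultimately show ?thesis
    unfolding V_def[symmetric] step sum.distrib by simp
qed

text \<open>The recurrence of \<open>num_lattice_paths\<close> in the first step says \<open>(1 - step) * path_count = 1\<close>.\<close>

lemma path_count_inv_mult_path_count: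
  assumes u: "mdeg u + 1 = d" and v: "mdeg v + 1 = d"
  shows "(\<Sum>w\<in>{w. mdeg w + 1 = d}. path_count_inv u w * path_count w v) = of_bool (u = v)"
proof -
  obtain a b c where u_abc: "u = (a, b, c)" by (cases u)
  obtain a' b' c' where v_abc: "v = (a', b', c')" by (cases v)
  define SE where "SE = int (num_lattice_paths (int c + 1, int a - 1) (lat_coord v))"
  define E where "E = int (num_lattice_paths (int c + 1, int a) (lat_coord v))"
  have "(if 0 < a then path_count (a - 1, b, c + 1) v else 0) = SE"
  proof (cases "0 < a")
    case False
    then show ?thesis
      using num_lattice_paths_nonzeroD(1)[of "(int c + 1, int a - 1)" "lat_coord v"]
      by (force simp: SE_def v_abc)
  qed (simp add: path_count_def SE_def of_nat_diff add.commute)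
  moreover have "(if 0 < b then path_count (a, b - 1, c + 1) v else 0) = E"
  proof (cases "0 < b")
    case False
    then show ?thesis
      using u v num_lattice_paths_nonzeroD(2)[of "(int c + 1, int a)" "lat_coord v"]
      by (force simp: E_def u_abc v_abc)
  qed (simp add: path_count_def E_def add.commute)
  ultimately have "(\<Sum>w\<in>{w. mdeg w + 1 = d}. path_count_inv u w * path_count w v) = path_count u v - (SE + E)"
    using finite_mdeg_eq[of 1 d] u sum_lattice_step_path_count[of a b c d v]
    by (simp add: u_abc path_count_inv_def left_diff_distrib sum_subtractf sum.delta)
  also have "\<dots> = of_bool (lat_coord u = lat_coord v)"
    using num_lattice_paths_rec[of "lat_coord u" "lat_coord v"]
    by (simp add: path_count_def u_abc SE_def E_def)
  also have "lat_coord u = lat_coord v \<longleftrightarrow> u = v"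
    using u v by (auto simp: u_abc v_abc)
  finally show ?thesis .
qed

lemma det_path_count_inv_rl_nth:
  assumes "finite Q"
  shows "det (enum_mat path_count_inv (rl_nth Q) (rl_nth Q) (card Q) (card Q)) = 1"
proof -
  have "det (enum_mat path_count_inv (rl_nth Q) (rl_nth Q) (card Q) (card Q)) =
      prod_list (diag_mat (enum_mat path_count_inv (rl_nth Q) (rl_nth Q) (card Q) (card Q)))"
    by (rule det_lower_triangular[of "card Q"])
      (simp_all add: path_count_inv_eq_0_if_revlex_less rl_nth_strict_mono[OF assms])
  also have "diag_mat (enum_mat path_count_inv (rl_nth Q) (rl_nth Q) (card Q) (card Q)) =
      replicate (card Q) 1"
    by (rule nth_equalityI) (simp_all add: diag_mat_def)
  also have "prod_list (replicate (card Q) 1) = (1 :: int)"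
    by simp
  finally show ?thesis .
qed

lemma path_count_inv_times_z:
  "path_count_inv u (times_z m) =
    - ((-1) ^ snd (snd u) * (-1) ^ snd (snd m) * of_bool (shares_edge (Down m) (Up u)))"
proof -
  have "lattice_step u (times_z m) \<longleftrightarrow> u = times_x m \<or> u = times_y m"
    using inj_times_z by (auto simp: lattice_step_def inj_eq)
  moreover obtain a b c where "m = (a, b, c)" by (cases m)
  ultimately show ?thesis
    by (auto simp: path_count_inv_def shares_edge_Down_Up_iff)
qed

lemma path_count_inv_eq_0_if_unused:
  assumes "monomial_ideal I" and u: "u \<in> up_labels (T_region d I)"
    and w: "w \<notin> up_labels (T_region d I)" "w \<notin> times_z ` down_labels (T_region d I)"
  shows "path_count_inv u w = 0"
proof -
  have "\<not> lattice_step u w"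
  proof
    assume "lattice_step u w"
    then obtain m where m: "w = times_z m" "u = times_x m \<or> u = times_y m"
      by (auto simp: lattice_step_def)
    then have "m \<in> I"
      using u w by (auto simp: up_labels_T_region down_labels_T_region)
    then have "u \<in> I"
      using assms(1) m(2) by (cases m) (auto simp: monomial_ideal_def)
    then show False
      using u by (simp add: up_labels_T_region)
  qed
  moreover have "u \<noteq> w"
    using u w by auto
  ultimately show ?thesis
    by (simp add: path_count_inv_def)
qed

locale balanced_region =
  fixes d :: nat and I :: "mono set"
  assumes balanced: "balanced (T_region d I)"
begin

abbreviation "reg \<equiv> T_region d I"
abbreviation "Ups \<equiv> up_labels reg"
abbreviation "Downs \<equiv> down_labels reg"
abbreviation "Zs \<equiv> times_z ` Downs" \<comment> \<open>the vertices of \<open>L(T)\<close> lying on downward triangles\<close>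
abbreviation "As \<equiv> A_verts reg"
abbreviation "Es \<equiv> E_verts reg"
abbreviation "all_ups \<equiv> {u. mdeg u + 1 = d}"

lemma finite_Ups: "finite Ups"
  by (rule finite_up_labels_T_region)

lemma finite_Downs: "finite Downs"
  by (rule finite_down_labels_T_region)

lemma finite_all_ups: "finite all_ups"
  by (rule finite_mdeg_eq)

lemma finite_As: "finite As"
  using finite_Ups by (simp add: A_verts_eq)

lemma finite_Es: "finite Es"
  using finite_Downs by (simp add: E_verts_eq)

lemma card_Downs: "card Downs = card Ups"
  using balanced by (simp add: balanced_def)

lemma card_Zs: "card Zs = card Ups"
  using card_Downs card_image inj_times_z by (metis inj_on_subset subset_UNIV)

lemma card_Es: "card Es = card As"
proof -
  have "card (Zs - Ups) = card (Ups - Zs)"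
    using finite_Ups finite_Downs card_Zs
    by (simp add: card_Diff_subset_Int Int_commute)
  then show ?thesis
    by (simp add: A_verts_eq E_verts_eq)
qed

lemma Ups_subset: "Ups \<subseteq> all_ups" and Zs_subset: "Zs \<subseteq> all_ups"
  by (auto simp: up_labels_T_region down_labels_T_region)

lemma bij_betw_W_tri: "bij_betw (W_tri reg) {0..<card Ups} Ups"
  unfolding W_tri_def[abs_def] by (rule bij_betw_rl_nth[OF finite_Ups])

lemma bij_betw_B_tri: "bij_betw (B_tri reg) {0..<card Ups} Downs"
  unfolding B_tri_def[abs_def] using bij_betw_rl_nth[OF finite_Downs] card_Downs by simp

lemma bij_betw_A_pt: "bij_betw (A_pt reg) {0..<card As} As"
  unfolding A_pt_def[abs_def] by (rule bij_betw_rl_nth[OF finite_As])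

lemma bij_betw_E_pt: "bij_betw (E_pt reg) {0..<card As} Es"
  unfolding E_pt_def[abs_def] using bij_betw_rl_nth[OF finite_Es] card_Es by simp

lemma bij_betw_times_z_B_tri: "bij_betw (times_z \<circ> B_tri reg) {0..<card Ups} Zs"
  using bij_betw_B_tri by (rule bij_betw_trans) (meson inj_on_imp_bij_betw inj_times_z inj_on_subset subset_UNIV)

section \<open>The determinants of \<open>Z(T)\<close> and \<open>N(T)\<close>\<close>

lemma abs_det_N_mat_eq_complementary_minor:
  "\<bar>det (N_mat reg)\<bar> = \<bar>det (enum_mat path_count_inv (rl_nth (all_ups - Es)) (rl_nth (all_ups - As))
      (card (all_ups - As)) (card (all_ups - As)))\<bar>"
proof -
  note fin = finite_all_ups
  have As: "As \<subseteq> all_ups" and Es: "Es \<subseteq> all_ups"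
    using Ups_subset Zs_subset by (auto simp: A_verts_eq E_verts_eq)
  have "card (all_ups - Es) = card (all_ups - As)"
    using fin As Es card_Es finite_As finite_Es by (simp add: card_Diff_subset)
  then have bij_Es': "bij_betw (rl_nth (all_ups - Es)) {0..<card (all_ups - As)} (all_ups - Es)"
    using bij_betw_rl_nth[of "all_ups - Es"] fin by simp
  have "N_mat reg = enum_mat path_count (A_pt reg) (E_pt reg) (card As) (card As)"
    by (simp add: N_mat_def enum_mat_def path_count_def card_Es)
  then show ?thesis
    using abs_det_complementary_minor[OF fin As Es path_count_inv_mult_path_count
        bij_betw_A_pt bij_betw_E_pt bij_betw_rl_nth[of "all_ups - As"] bij_Es'] fin
    by simp
qed

lemma enum_mat_path_count_inv_Ups_unused:
  assumes "monomial_ideal I" "\<And>j. j < k \<Longrightarrow> q j \<notin> Ups \<union> Zs"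
  shows "enum_mat path_count_inv (W_tri reg) q (card Ups) k = 0\<^sub>m (card Ups) k"
proof (rule eq_matI)
  fix i j assume "i < dim_row (0\<^sub>m (card Ups) k)" "j < dim_col (0\<^sub>m (card Ups) k)"
  then have ij: "i < card Ups" "j < k" by simp_all
  then have "W_tri reg i \<in> Ups" "q j \<notin> Ups \<union> Zs"
    using bij_betwE[OF bij_betw_W_tri] assms(2) by auto
  then show "enum_mat path_count_inv (W_tri reg) q (card Ups) k $$ (i, j) = 0\<^sub>m (card Ups) k $$ (i, j)"
    using ij path_count_inv_eq_0_if_unused[OF assms(1)] by simp
qed simp_all

lemma abs_det_complementary_minor_eq_Ups_Zs_minor:
  assumes "monomial_ideal I"
  shows "\<bar>det (enum_mat path_count_inv (rl_nth (all_ups - Es)) (rl_nth (all_ups - As))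
      (card (all_ups - As)) (card (all_ups - As)))\<bar> =
    \<bar>det (enum_mat path_count_inv (W_tri reg) (times_z \<circ> B_tri reg) (card Ups) (card Ups))\<bar>"
proof -
  define Q where "Q = all_ups - Ups - Zs"
  have fin: "finite all_ups" "finite Q"
    using finite_all_ups by (auto simp: Q_def)
  have Q_unused: "rl_nth Q j \<notin> Ups \<union> Zs" if "j < card Q" for j
    using that bij_betwE[OF bij_betw_rl_nth[OF fin(2)]] by (simp add: Q_def)
  have rows: "all_ups - Es = Ups \<union> Q" and cols: "all_ups - As = Zs \<union> Q"
    using Ups_subset Zs_subset by (auto simp: Q_def A_verts_eq E_verts_eq)
  have card_cols: "card (all_ups - As) = card Ups + card Q"
    unfolding cols using fin finite_Downs card_Zs by (subst card_Un_disjoint) (auto simp: Q_def)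
  have card_rows: "card (all_ups - Es) = card Ups + card Q"
    unfolding rows using fin finite_Ups by (subst card_Un_disjoint) (auto simp: Q_def)
  have bij_rows: "bij_betw (enum_append (W_tri reg) (card Ups) (rl_nth Q)) {0..<card Ups + card Q}
      (all_ups - Es)"
    unfolding rows by (rule bij_betw_enum_append[OF bij_betw_W_tri bij_betw_rl_nth[OF fin(2)]])
      (auto simp: Q_def)
  have bij_cols: "bij_betw (enum_append (times_z \<circ> B_tri reg) (card Ups) (rl_nth Q))
      {0..<card Ups + card Q} (all_ups - As)"
    unfolding cols by (rule bij_betw_enum_append[OF bij_betw_times_z_B_tri bij_betw_rl_nth[OF fin(2)]])
      (auto simp: Q_def)
  have "\<bar>det (enum_mat path_count_inv (rl_nth (all_ups - Es)) (rl_nth (all_ups - As))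
      (card (all_ups - As)) (card (all_ups - As)))\<bar> =
    \<bar>det (enum_mat path_count_inv (enum_append (W_tri reg) (card Ups) (rl_nth Q))
      (enum_append (times_z \<circ> B_tri reg) (card Ups) (rl_nth Q))
      (card Ups + card Q) (card Ups + card Q))\<bar>"
    unfolding card_cols
    by (rule abs_det_enum_mat_reindex[OF _ bij_rows _ bij_cols])
      (use bij_betw_rl_nth[of "all_ups - Es"] bij_betw_rl_nth[of "all_ups - As"] fin card_rows card_cols
        in simp_all)
  also have "\<dots> = \<bar>det (enum_mat path_count_inv (W_tri reg) (times_z \<circ> B_tri reg) (card Ups) (card Ups))\<bar>"
    unfolding enum_mat_enum_append
    by (subst det_four_block_mat_upper_right_zero[of _ "card Ups" _ "card Q"])
      (simp_all add: det_path_count_inv_rl_nth[OF fin(2)] enum_mat_path_count_inv_Ups_unused[OF assms Q_unused])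
  finally show ?thesis .
qed

lemma abs_det_Z_mat_eq_Ups_Zs_minor:
  "\<bar>det (Z_mat reg)\<bar> =
    \<bar>det (enum_mat path_count_inv (W_tri reg) (times_z \<circ> B_tri reg) (card Ups) (card Ups))\<bar>"
proof -
  define n where "n = card Ups"
  define s where "s i = - ((-1 :: int) ^ snd (snd (W_tri reg i)))" for i
  define t where "t j = (-1 :: int) ^ snd (snd (B_tri reg j))" for j
  have Z: "Z_mat reg \<in> carrier_mat n n"
    by (simp add: Z_mat_def n_def card_Downs)
  have "enum_mat path_count_inv (W_tri reg) (times_z \<circ> B_tri reg) n n =
      mat n n (\<lambda>(i, j). s i * t j * transpose_mat (Z_mat reg) $$ (i, j))"
    by (rule eq_matI) (auto simp: Z_mat_def n_def card_Downs s_def t_def path_count_inv_times_z)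
  then have "det (enum_mat path_count_inv (W_tri reg) (times_z \<circ> B_tri reg) n n) =
      (\<Prod>i<n. s i) * (\<Prod>j<n. t j) * det (Z_mat reg)"
    using det_scale_rows_cols[of "transpose_mat (Z_mat reg)" n s t] Z
    by (simp add: det_transpose)
  moreover have "\<bar>\<Prod>i<n. s i\<bar> = 1" "\<bar>\<Prod>j<n. t j\<bar> = 1"
    by (simp_all add: abs_prod s_def t_def)
  ultimately show ?thesis
    by (simp add: abs_mult n_def)
qed

lemma abs_det_Z_mat_eq_abs_det_N_mat:
  "monomial_ideal I \<Longrightarrow> \<bar>det (Z_mat reg)\<bar> = \<bar>det (N_mat reg)\<bar>"
  using abs_det_Z_mat_eq_Ups_Zs_minor abs_det_complementary_minor_eq_Ups_Zs_minor
    abs_det_N_mat_eq_complementary_minor by simp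

end

section \<open>The perfect matching sign and the lattice path sign\<close>

context balanced_region
begin

text \<open>A reference bijection: \<open>W\<^sub>i \<mapsto> B\<^sub>i z\<close> on the upward triangles and \<open>E\<^sub>j \<mapsto> A\<^sub>j\<close> on the
  endpoints.  Composing it with the matching of a tiling gives a permutation whose
  excursions are the lattice paths of that tiling.\<close>

definition ref_perm :: "mono \<Rightarrow> mono" where
  "ref_perm v =
    (if v \<in> Ups then times_z (B_tri reg (inv_into {0..<card Ups} (W_tri reg) v))
     else if v \<in> Es then A_pt reg (inv_into {0..<card As} (E_pt reg) v) else v)"

lemma ref_perm_W_tri: "i < card Ups \<Longrightarrow> ref_perm (W_tri reg i) = times_z (B_tri reg i)"
  using bij_betw_W_tri bij_betwE by (fastforce simp: ref_perm_def bij_betw_inv_into_left)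

lemma ref_perm_E_pt: "j < card As \<Longrightarrow> ref_perm (E_pt reg j) = A_pt reg j"
proof -
  assume j: "j < card As"
  then have "E_pt reg j \<in> Es" "E_pt reg j \<notin> Ups"
    using bij_betwE[OF bij_betw_E_pt] by (auto simp: E_verts_eq)
  then show ?thesis
    using j bij_betw_E_pt by (simp add: ref_perm_def bij_betw_inv_into_left)
qed

lemma bij_betw_ref_perm_Ups: "bij_betw ref_perm Ups Zs"
  using bij_betw_trans[OF bij_betw_inv_into[OF bij_betw_W_tri] bij_betw_times_z_B_tri]
  by (rule bij_betw_cong[THEN iffD1, rotated]) (simp add: ref_perm_def)

lemma ref_perm_permutes: "ref_perm permutes (Ups \<union> Es)"
proof (rule bij_imp_permutes)
  note bij_betw_ref_perm_Ups
  moreover have "bij_betw ref_perm Es As"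
    using bij_betw_trans[OF bij_betw_inv_into[OF bij_betw_E_pt] bij_betw_A_pt]
    by (rule bij_betw_cong[THEN iffD1, rotated]) (auto simp: ref_perm_def E_verts_eq)
  ultimately have "bij_betw ref_perm (Ups \<union> Es) (Zs \<union> As)"
    by (rule bij_betw_combine) (auto simp: A_verts_eq)
  moreover have "Zs \<union> As = Ups \<union> Es"
    by (auto simp: A_verts_eq E_verts_eq)
  ultimately show "bij_betw ref_perm (Ups \<union> Es) (Ups \<union> Es)"
    by simp
qed (simp add: ref_perm_def)

definition z_degree_gain :: int where
  "z_degree_gain = (\<Sum>v\<in>Zs. int (snd (snd v))) - (\<Sum>u\<in>Ups. int (snd (snd u)))"

end

locale tiled_region = balanced_region +
  fixes \<tau> :: "tri set set"
  assumes tiling: "lozenge_tiling (T_region d I) \<tau>"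
begin

abbreviation "matched m u \<equiv> {Down m, Up u} \<in> \<tau>"

lemma matchedD:
  assumes "matched m u"
  shows "m \<in> Downs" "u \<in> Ups" "shares_edge (Down m) (Up u)"
proof -
  have "lozenge {Down m, Up u}" "{Down m, Up u} \<subseteq> reg"
    using tiling assms by (auto simp: lozenge_tiling_def)
  then show "m \<in> Downs" "u \<in> Ups" "shares_edge (Down m) (Up u)"
    by (auto simp: up_labels_def down_labels_def Down_Up_eq_iff elim!: lozenge_Down_Up)
qed

lemma tile_containing:
  assumes "t \<in> reg"
  obtains m u where "matched m u" "t \<in> {Down m, Up u}"
proof -
  obtain L where "L \<in> \<tau>" "t \<in> L"
    using tiling assms by (auto simp: lozenge_tiling_def)
  moreover from \<open>L \<in> \<tau>\<close> have "lozenge L"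
    using tiling by (auto simp: lozenge_tiling_def)
  ultimately show ?thesis
    using that by (auto elim!: lozenge_Down_Up)
qed

lemma matched_Down_ex: "m \<in> Downs \<Longrightarrow> \<exists>u. matched m u"
  by (auto simp: down_labels_def elim!: tile_containing)

lemma matched_Up_ex: "u \<in> Ups \<Longrightarrow> \<exists>m. matched m u"
  by (auto simp: up_labels_def elim!: tile_containing)

lemma matched_unique_tile:
  assumes "matched m u" "matched m' u'" "Down m' = Down m \<or> Up u' = Up u"
  shows "m' = m" "u' = u"
proof -
  have "Down m \<in> reg" "Up u \<in> reg"
    using matchedD[OF assms(1)] by (simp_all add: up_labels_def down_labels_def)
  then have "\<exists>!L. L \<in> \<tau> \<and> Down m \<in> L" "\<exists>!L. L \<in> \<tau> \<and> Up u \<in> L"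
    using tiling by (auto simp: lozenge_tiling_def)
  then have "{Down m', Up u'} = {Down m, Up u}"
    using assms by blast
  then show "m' = m" "u' = u"
    by (simp_all add: Down_Up_eq_iff)
qed

lemma matched_unique_Up: "matched m u \<Longrightarrow> matched m u' \<Longrightarrow> u' = u"
  using matched_unique_tile by blast

lemma matched_unique_Down: "matched m u \<Longrightarrow> matched m' u \<Longrightarrow> m' = m"
  using matched_unique_tile by blast

lemma W_tri_surj:
  assumes "u \<in> Ups"
  obtains j where "j < card Ups" "W_tri reg j = u"
proof -
  have "u \<in> W_tri reg ` {0..<card Ups}"
    using assms bij_betw_W_tri by (simp add: bij_betw_def)
  then show ?thesis
    using that by auto
qed

lemma pm_perm_matched:
  assumes i: "i < card Ups"
  shows "pm_perm reg \<tau> i < card Ups \<and> matched (B_tri reg i) (W_tri reg (pm_perm reg \<tau> i))"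
proof -
  have "B_tri reg i \<in> Downs"
    using bij_betwE[OF bij_betw_B_tri] i by simp
  then obtain u where u: "matched (B_tri reg i) u"
    using matched_Down_ex by blast
  then obtain j where j: "j < card Ups" "W_tri reg j = u"
    using matchedD(2) W_tri_surj by metis
  have "pm_perm reg \<tau> i = (THE j. j < card Ups \<and> matched (B_tri reg i) (W_tri reg j))"
    using i by (simp add: pm_perm_def card_Downs)
  also have "\<dots> = j"
  proof (rule the_equality)
    fix j' assume j': "j' < card Ups \<and> matched (B_tri reg i) (W_tri reg j')"
    then have "W_tri reg j' = W_tri reg j"
      using j u matched_unique_Up by blast
    then show "j' = j"
      using j j' bij_betw_W_tri by (simp add: bij_betw_def inj_on_def)
  qed (use j u in simp)
  finally show ?thesis
    using j u by simp
qed

lemma pm_perm_permutes: "pm_perm reg \<tau> permutes {0..<card Ups}"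
proof (rule inj_imp_permutes)
  show "inj_on (pm_perm reg \<tau>) {0..<card Ups}"
  proof (rule inj_onI)
    fix i j assume "i \<in> {0..<card Ups}" "j \<in> {0..<card Ups}" "pm_perm reg \<tau> i = pm_perm reg \<tau> j"
    then have ij: "i < card Ups" "j < card Ups" "pm_perm reg \<tau> i = pm_perm reg \<tau> j" by simp_all
    then have "B_tri reg i = B_tri reg j"
      using pm_perm_matched[OF ij(1)] pm_perm_matched[OF ij(2)] matched_unique_Down by metis
    then show "i = j"
      using ij bij_betw_B_tri by (simp add: bij_betw_def inj_on_def)
  qed
qed (auto simp: pm_perm_matched, simp add: pm_perm_def card_Downs)

definition tiling_perm :: "mono \<Rightarrow> mono" where
  "tiling_perm = ref_perm \<circ> map_permutation {0..<card Ups} (W_tri reg) (Hilbert_Choice.inv (pm_perm reg \<tau>))"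

lemma tiling_perm_permutes: "tiling_perm permutes (Ups \<union> Es)"
proof -
  have "map_permutation {0..<card Ups} (W_tri reg) (Hilbert_Choice.inv (pm_perm reg \<tau>)) permutes Ups"
    using bij_betw_W_tri permutes_inv[OF pm_perm_permutes] by (rule map_permutation_permutes)
  then show ?thesis
    unfolding tiling_perm_def
    by (intro permutes_compose[OF _ ref_perm_permutes]) (auto intro: permutes_subset)
qed

lemma sign_tiling_perm: "sign tiling_perm = sign ref_perm * sgn_pm reg \<tau>"
proof -
  have inj_W: "inj_on (W_tri reg) {0..<card Ups}"
    using bij_betw_W_tri by (simp add: bij_betw_def)
  note inv_pm = permutes_inv[OF pm_perm_permutes]
  have "permutation (map_permutation {0..<card Ups} (W_tri reg) (Hilbert_Choice.inv (pm_perm reg \<tau>)))"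
    using map_permutation_permutes[OF bij_betw_W_tri inv_pm] finite_Ups permutation_permutes by blast
  moreover have "permutation ref_perm"
    using ref_perm_permutes finite_Ups finite_Es permutation_permutes by blast
  moreover have "permutation (pm_perm reg \<tau>)"
    using pm_perm_permutes by (auto simp: permutation_permutes)
  then have "sign (Hilbert_Choice.inv (pm_perm reg \<tau>)) = sign (pm_perm reg \<tau>)"
    by (rule sign_inverse)
  ultimately show ?thesis
    unfolding tiling_perm_def sgn_pm_def
    by (simp add: sign_compose sign_map_permutation[OF inj_W inv_pm])
qed

lemma tiling_perm_matched:
  assumes "matched m u"
  shows "tiling_perm u = times_z m"
proof -
  obtain k where k: "k < card Ups" "W_tri reg k = u"
    using matchedD(2)[OF assms] by (rule W_tri_surj)
  define i where "i = Hilbert_Choice.inv (pm_perm reg \<tau>) k"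
  have i: "i < card Ups" "pm_perm reg \<tau> i = k"
    using k pm_perm_permutes permutes_inv[OF pm_perm_permutes]
    by (auto simp: i_def permutes_inverses permutes_in_image)
  have "map_permutation {0..<card Ups} (W_tri reg) (Hilbert_Choice.inv (pm_perm reg \<tau>)) u = W_tri reg i"
    unfolding i_def
    using map_permutation_apply[of "W_tri reg" "{0..<card Ups}" k] k bij_betw_W_tri
    by (simp add: bij_betw_def)
  then have "tiling_perm u = times_z (B_tri reg i)"
    using i by (simp add: tiling_perm_def ref_perm_W_tri)
  moreover have "matched (B_tri reg i) u"
    using pm_perm_matched[OF i(1)] i k by simp
  ultimately show ?thesis
    using assms matched_unique_Down by blast
qed

lemma tiling_perm_E_pt:
  assumes "j < card As"
  shows "tiling_perm (E_pt reg j) = A_pt reg j"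
proof -
  have "E_pt reg j \<notin> W_tri reg ` {0..<card Ups}"
    using assms bij_betwE[OF bij_betw_E_pt] bij_betw_W_tri by (auto simp: E_verts_eq bij_betw_def)
  then show ?thesis
    using assms by (simp add: tiling_perm_def map_permutation_def ref_perm_E_pt)
qed

lemma tiling_perm_Ups: "tiling_perm ` Ups = Zs"
proof -
  have "map_permutation {0..<card Ups} (W_tri reg) (Hilbert_Choice.inv (pm_perm reg \<tau>)) ` Ups = Ups"
    using map_permutation_permutes[OF bij_betw_W_tri permutes_inv[OF pm_perm_permutes]]
    by (rule permutes_image)
  then show ?thesis
    using bij_betw_ref_perm_Ups unfolding tiling_perm_def image_comp[symmetric]
    by (simp add: bij_betw_def)
qed

lemma tiling_perm_not_fixed:
  assumes "u \<in> Ups" "tiling_perm u \<noteq> u"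
  obtains m where "matched m u" "tiling_perm u = times_z m" "u = times_x m \<or> u = times_y m"
proof -
  obtain m where m: "matched m u"
    using matched_Up_ex assms(1) by blast
  then have "tiling_perm u = times_z m"
    by (rule tiling_perm_matched)
  moreover have "u = times_x m \<or> u = times_y m"
    using matchedD(3)[OF m] assms(2) calculation by (auto simp: shares_edge_Down_Up_iff)
  ultimately show ?thesis
    using that m by blast
qed

lemma excursions_tiling_perm: "excursions (Ups \<union> Es) Es tiling_perm = lp_step \<tau>"
proof (intro Set.set_eqI iffI)
  fix p assume "p \<in> excursions (Ups \<union> Es) Es tiling_perm"
  then obtain u where "p = (u, tiling_perm u)" "u \<in> Ups" "tiling_perm u \<noteq> u"
    by (auto simp: excursions_def)
  then show "p \<in> lp_step \<tau>"
    by (auto simp: lp_step_def elim!: tiling_perm_not_fixed)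
next
  fix p assume "p \<in> lp_step \<tau>"
  then obtain u m where p: "p = (u, times_z m)" "matched m u" "u \<noteq> times_z m"
    by (auto simp: lp_step_def)
  moreover have "u \<in> Ups" "u \<notin> Es"
    using matchedD(2)[OF p(2)] by (auto simp: E_verts_eq)
  ultimately show "p \<in> excursions (Ups \<union> Es) Es tiling_perm"
    by (auto simp: excursions_iff tiling_perm_matched)
qed

lemma z_degree_tiling_perm:
  assumes "u \<in> Ups" "tiling_perm u \<noteq> u"
  shows "snd (snd (tiling_perm u)) = Suc (snd (snd u))"
  using assms by (elim tiling_perm_not_fixed) (auto split: prod.splits)

lemma excursion_reaches_Es:
  "x \<in> Ups \<Longrightarrow> tiling_perm x \<noteq> x \<Longrightarrow> \<exists>e\<in>Es. (x, e) \<in> (lp_step \<tau>)\<^sup>*"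
proof (induction x rule: measure_induct_rule[where f = "\<lambda>x. d - snd (snd x)"])
  case (less x)
  let ?y = "tiling_perm x"
  have step: "(x, ?y) \<in> lp_step \<tau>"
    using less.prems by (auto simp: excursions_tiling_perm[symmetric] excursions_iff E_verts_eq)
  have "?y \<in> Zs"
    using less.prems(1) tiling_perm_Ups by blast
  then have "mdeg ?y + 1 = d"
    by (auto simp: down_labels_T_region)
  then have "d - snd (snd ?y) < d - snd (snd x)"
    using z_degree_tiling_perm[OF less.prems] by (cases ?y) auto
  moreover have "tiling_perm ?y \<noteq> ?y"
    using less.prems(2) permutes_inj[OF tiling_perm_permutes] by (metis inj_eq)
  moreover have "?y \<in> Es \<or> ?y \<in> Ups"
    using \<open>?y \<in> Zs\<close> by (auto simp: E_verts_eq)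
  ultimately obtain e where "e \<in> Es" "(?y, e) \<in> (lp_step \<tau>)\<^sup>*"
    using less.IH by blast
  then show ?case
    using step by (meson converse_rtrancl_into_rtrancl)
qed

lemma E_pt_surj:
  assumes "e \<in> Es"
  obtains j where "j < card As" "E_pt reg j = e"
proof -
  have "e \<in> E_pt reg ` {0..<card As}"
    using assms bij_betw_E_pt by (simp add: bij_betw_def)
  then show ?thesis
    using that by auto
qed

lemma lp_perm_reaches:
  assumes i: "i < card As"
  shows "lp_perm reg \<tau> i < card As \<and> (A_pt reg i, E_pt reg (lp_perm reg \<tau> i)) \<in> (lp_step \<tau>)\<^sup>*"
proof -
  have a: "A_pt reg i \<in> Ups" "A_pt reg i \<notin> Zs"
    using bij_betwE[OF bij_betw_A_pt] i by (auto simp: A_verts_eq)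
  moreover have "tiling_perm (A_pt reg i) \<in> Zs"
    using a(1) tiling_perm_Ups by blast
  ultimately obtain e where e: "e \<in> Es" "(A_pt reg i, e) \<in> (lp_step \<tau>)\<^sup>*"
    using excursion_reaches_Es by metis
  obtain k where k: "k < card As" "E_pt reg k = e"
    using E_pt_surj[OF e(1)] by blast
  have "lp_perm reg \<tau> i = (THE j. j < card As \<and> (A_pt reg i, E_pt reg j) \<in> (lp_step \<tau>)\<^sup>*)"
    using i by (simp add: lp_perm_def card_Es)
  also have "\<dots> = k"
  proof (rule the_equality)
    fix j assume j: "j < card As \<and> (A_pt reg i, E_pt reg j) \<in> (lp_step \<tau>)\<^sup>*"
    then have "E_pt reg j \<in> Es"
      using bij_betwE[OF bij_betw_E_pt] by simp
    then have "E_pt reg j = e"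
      using rtrancl_excursions_unique_base[of "A_pt reg i" _ "Ups \<union> Es" Es tiling_perm] j e
      unfolding excursions_tiling_perm by blast
    then show "j = k"
      using j k bij_betw_E_pt by (simp add: bij_betw_def inj_on_def)
  qed (use k e in simp)
  finally show ?thesis
    using k e by simp
qed

lemma lp_perm_permutes: "lp_perm reg \<tau> permutes {0..<card As}"
proof (rule inj_imp_permutes)
  show "inj_on (lp_perm reg \<tau>) {0..<card As}"
  proof (rule inj_onI)
    fix i j assume "i \<in> {0..<card As}" "j \<in> {0..<card As}" "lp_perm reg \<tau> i = lp_perm reg \<tau> j"
    then have ij: "i < card As" "j < card As" "lp_perm reg \<tau> i = lp_perm reg \<tau> j" by simp_all
    have no_pred: "A_pt reg k \<notin> Range (excursions (Ups \<union> Es) Es tiling_perm)" if "k < card As" for k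
    proof
      assume "A_pt reg k \<in> Range (excursions (Ups \<union> Es) Es tiling_perm)"
      then obtain u where "u \<in> Ups" "A_pt reg k = tiling_perm u"
        by (auto simp: excursions_iff E_verts_eq)
      then have "A_pt reg k \<in> Zs"
        using tiling_perm_Ups by blast
      then show False
        using that bij_betwE[OF bij_betw_A_pt] by (auto simp: A_verts_eq)
    qed
    have "A_pt reg i = A_pt reg j"
      using rtrancl_excursions_unique_source[OF permutes_inj[OF tiling_perm_permutes],
          where S = "Ups \<union> Es" and C = Es]
        lp_perm_reaches[OF ij(1)] lp_perm_reaches[OF ij(2)] no_pred[OF ij(1)] no_pred[OF ij(2)] ij(3)
      unfolding excursions_tiling_perm by metis
    then show "i = j"
      using ij bij_betw_A_pt by (simp add: bij_betw_def inj_on_def)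
  qed
qed (auto simp: lp_perm_reaches, simp add: lp_perm_def)

lemma card_moved_eq_z_degree_gain: "int (card {u \<in> Ups. tiling_perm u \<noteq> u}) = z_degree_gain"
proof -
  have "int (card {u \<in> Ups. tiling_perm u \<noteq> u}) = (\<Sum>u\<in>Ups. of_bool (tiling_perm u \<noteq> u))"
    using finite_Ups by (simp add: sum.inter_filter[symmetric] Int_def conj_commute)
  also have "\<dots> = (\<Sum>u\<in>Ups. int (snd (snd (tiling_perm u))) - int (snd (snd u)))"
    by (rule sum.cong) (simp_all add: z_degree_tiling_perm)
  also have "\<dots> = (\<Sum>u\<in>Ups. int (snd (snd (tiling_perm u)))) - (\<Sum>u\<in>Ups. int (snd (snd u)))"
    by (simp add: sum_subtractf)
  also have "(\<Sum>u\<in>Ups. int (snd (snd (tiling_perm u)))) = (\<Sum>v\<in>Zs. int (snd (snd v)))"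
  proof -
    have "inj_on tiling_perm Ups"
      using permutes_inj[OF tiling_perm_permutes] by (rule inj_on_subset) simp
    then show ?thesis
      unfolding tiling_perm_Ups[symmetric] by (simp add: sum.reindex)
  qed
  finally show ?thesis
    by (simp add: z_degree_gain_def)
qed

lemma lp_perm_as_permutation:
  "map_permutation {0..<card As} (E_pt reg) (lp_perm reg \<tau>) permutes Es"
  "sign (map_permutation {0..<card As} (E_pt reg) (lp_perm reg \<tau>)) = sgn_lp reg \<tau>"
proof -
  have "inj_on (E_pt reg) {0..<card As}"
    using bij_betw_E_pt by (simp add: bij_betw_def)
  then show "map_permutation {0..<card As} (E_pt reg) (lp_perm reg \<tau>) permutes Es"
    "sign (map_permutation {0..<card As} (E_pt reg) (lp_perm reg \<tau>)) = sgn_lp reg \<tau>"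
    using map_permutation_permutes[OF bij_betw_E_pt lp_perm_permutes]
      sign_map_permutation[OF _ lp_perm_permutes] by (simp_all add: sgn_lp_def)
qed

lemma sign_tiling_perm_eq_sgn_lp: "sign tiling_perm = (-1) ^ nat z_degree_gain * sgn_lp reg \<tau>"
proof -
  define g where "g = map_permutation {0..<card As} (E_pt reg) (lp_perm reg \<tau>)"
  have "sign tiling_perm = (-1) ^ card {x \<in> (Ups \<union> Es) - Es. tiling_perm x \<noteq> x} * sign g"
  proof (rule sign_eq_by_excursions[where \<rho> = "\<lambda>v. snd (snd v)"])
    show "finite (Ups \<union> Es)" using finite_Ups finite_Es by simp
    show "g permutes Es" using lp_perm_as_permutation(1) by (simp add: g_def)
    show "snd (snd x) < snd (snd (tiling_perm x))" if "x \<in> Ups \<union> Es - Es" "tiling_perm x \<noteq> x" for x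
      using that z_degree_tiling_perm[of x] by auto
    show "(tiling_perm c, g c) \<in> (excursions (Ups \<union> Es) Es tiling_perm)\<^sup>*" if c: "c \<in> Es" for c
    proof -
      obtain j where j: "j < card As" "E_pt reg j = c"
        using E_pt_surj[OF c] by blast
      then have "g c = E_pt reg (lp_perm reg \<tau> j)"
        using map_permutation_apply[of "E_pt reg" "{0..<card As}" j] bij_betw_E_pt
        by (simp add: g_def bij_betw_def)
      then show ?thesis
        using j lp_perm_reaches[OF j(1)] tiling_perm_E_pt[OF j(1)] by (simp add: excursions_tiling_perm)
    qed
  qed (simp_all add: tiling_perm_permutes)
  moreover have "(Ups \<union> Es) - Es = Ups"
    by (auto simp: E_verts_eq)
  moreover have "card {u \<in> Ups. tiling_perm u \<noteq> u} = nat z_degree_gain"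
    using arg_cong[OF card_moved_eq_z_degree_gain, of nat] by simp
  ultimately show ?thesis
    using lp_perm_as_permutation(2) by (simp add: g_def)
qed

lemma sgn_pm_mult_sgn_lp: "sgn_pm reg \<tau> * sgn_lp reg \<tau> = sign ref_perm * (-1) ^ nat z_degree_gain"
proof -
  have eq: "sign ref_perm * sgn_pm reg \<tau> = (-1) ^ nat z_degree_gain * sgn_lp reg \<tau>"
    using sign_tiling_perm sign_tiling_perm_eq_sgn_lp by simp
  have sq: "sign ref_perm * sign ref_perm = 1" "sgn_lp reg \<tau> * sgn_lp reg \<tau> = 1"
    by (simp_all add: sign_def sgn_lp_def)
  have "sgn_pm reg \<tau> * sgn_lp reg \<tau> = sign ref_perm * (sign ref_perm * sgn_pm reg \<tau>) * sgn_lp reg \<tau>"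
    using sq(1) by (simp add: mult.assoc[symmetric])
  also have "\<dots> = sign ref_perm * (-1) ^ nat z_degree_gain * (sgn_lp reg \<tau> * sgn_lp reg \<tau>)"
    unfolding eq by (simp only: mult.assoc)
  finally show ?thesis
    using sq(2) by simp
qed

end

lemma (in balanced_region) sgn_pm_mult_sgn_lp_of_tiling:
  assumes "lozenge_tiling reg \<tau>"
  shows "sgn_pm reg \<tau> * sgn_lp reg \<tau> = sign ref_perm * (-1) ^ nat z_degree_gain"
proof -
  interpret tiled_region d I \<tau>
    by unfold_locales (use assms balanced in simp_all)
  show ?thesis
    by (rule sgn_pm_mult_sgn_lp)
qed

theorem theorem4p6:
  fixes d :: nat and I :: "mono set"
  assumes "monomial_ideal I"
    and "balanced (T_region d I)"
  shows "(\<forall>\<tau> \<tau>'. lozenge_tiling (T_region d I) \<tau> \<longrightarrow> lozenge_tiling (T_region d I) \<tau>' \<longrightarrow>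
            sgn_pm (T_region d I) \<tau> * sgn_lp (T_region d I) \<tau> =
            sgn_pm (T_region d I) \<tau>' * sgn_lp (T_region d I) \<tau>')
       \<and> \<bar>det (Z_mat (T_region d I))\<bar> = \<bar>det (N_mat (T_region d I))\<bar>"
proof -
  interpret balanced_region d I
    using assms(2) by unfold_locales
  show ?thesis
    using sgn_pm_mult_sgn_lp_of_tiling abs_det_Z_mat_eq_abs_det_N_mat[OF assms(1)] by simp
qed
end
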